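(* Let $q\geq 3$ be odd and $A=(1/(\lambda+1),1]$. Then $\mu(\varphi_A>n)\sim n^{-1}$ as $n\to\infty$. Moreover, for every compact set $C\subseteq(0,1]$ there exists a measurable set $Y(C)\subseteq(0,1]$ with $C\subseteq Y(C)$ (namely $Y(C)=\bigcup_{k=0}^{N}F_q^{-k}(A)$ for suitable $N\in\mathbb{N}_0$) such that $\mu(\varphi_{Y(C)}>n)\sim n^{-1}$ as $n\to\infty$.
   Context: Let $q\geq 3$ be odd and $\lambda=2\cos(\pi/q)$. Elements of $\mathrm{PGL}_2(\mathbb{R})$ act on $\mathbb{R}\cup\{\infty\}$ by $\begin{bmatrix}a&b\\c&d\end{bmatrix}.x=(ax+b)/(cx+d)$. Put $s(x)=\sin(x\pi/q)/\sin(\pi/q)$, $g_k=\begin{bmatrix}s(k)&-s(k+1)\\-s(k-1)&s(k)\end{bmatrix}$, $Q=\begin{bmatrix}0&1\\1&0\end{bmatrix}$, $K=\{(q+1)/2,\dots,q-1\}$. The generalized Farey map $F_q\colon[0,1]\to[0,1]$ is $F_q(x)=g_k.x$ on $[g_k^{-1}.0,g_k^{-1}.1]$ and $F_q(x)=Qg_k.x$ on $[(Qg_k)^{-1}.1,(Qg_k)^{-1}.0]$, $k\in K$. $\mu$ is the measure on $[0,1]$ with density $1/x$ with respect to Lebesgue measure. For $Y\subseteq[0,1]$, the first return time map is $\varphi_Y\colon Y\to\mathbb{N}\cup\{\infty\}$, $\varphi_Y(x)=\inf\{n\in\mathbb{N}:F_q^n(x)\in Y\}$ ($\inf\emptyset=\infty$),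 and $\mu(\varphi_Y>n)=\mu(\{x\in Y:\varphi_Y(x)>n\})$. $a_n\sim b_n$ means $a_n/b_n\to 1$. *)

theory Defs
  imports "HOL-Analysis.Analysis" "HOL-Library.Extended_Nat" "HOL-Library.Landau_Symbols"
begin

text \<open>A 2x2 matrix [a b; c d] is represented as the tuple (a,b,c,d); its action on reals
  is the Moebius transformation x \<mapsto> (a x + b)/(c x + d).  All points used below have
  non-vanishing denominators, so no point at infinity is needed.\<close>

type_synonym mat2 = "real \<times> real \<times> real \<times> real"

definition mob :: "mat2 \<Rightarrow> real \<Rightarrow> real" where
  "mob M x = (case M of (a,b,c,d) \<Rightarrow> (a*x + b) / (c*x + d))"

text \<open>Inverse in PGL_2 (adjugate matrix).\<close>
definition minv :: "mat2 \<Rightarrow> mat2" where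
  "minv M = (case M of (a,b,c,d) \<Rightarrow> (d, -b, -c, a))"

text \<open>Left multiplication by Q = [0 1; 1 0].\<close>
definition Qmul :: "mat2 \<Rightarrow> mat2" where
  "Qmul M = (case M of (a,b,c,d) \<Rightarrow> (c, d, a, b))"

definition lam :: "nat \<Rightarrow> real" where
  "lam q = 2 * cos (pi / real q)"

definition sq :: "nat \<Rightarrow> real \<Rightarrow> real" where
  "sq q x = sin (x * pi / real q) / sin (pi / real q)"

definition gk :: "nat \<Rightarrow> nat \<Rightarrow> mat2" where
  "gk q k = (sq q (real k), - sq q (real k + 1), - sq q (real k - 1), sq q (real k))"

definition Kset :: "nat \<Rightarrow> nat set" where
  "Kset q = {(q+1) div 2 .. q - 1}"

text \<open>The generalized Farey map on [0,1]. On overlapping interval endpoints any of the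
  admissible branches is chosen (the branches agree there).\<close>
definition Farey :: "nat \<Rightarrow> real \<Rightarrow> real" where
  "Farey q x = (SOME y. \<exists>k\<in>Kset q.
      (x \<in> {mob (minv (gk q k)) 0 .. mob (minv (gk q k)) 1} \<and> y = mob (gk q k) x) \<or>
      (x \<in> {mob (minv (Qmul (gk q k))) 1 .. mob (minv (Qmul (gk q k))) 0} \<and>
        y = mob (Qmul (gk q k)) x))"

definition muF :: "real measure" where
  "muF = density lborel (\<lambda>x. ennreal (indicator {0<..1} x / x))"

definition return_time :: "(real \<Rightarrow> real) \<Rightarrow> real set \<Rightarrow> real \<Rightarrow> enat" where
  "return_time F Y x =
     (if \<exists>n\<ge>1. (F ^^ n) x \<in> Y then enat (LEAST n. n \<ge> 1 \<and> (F ^^ n) x \<in> Y) else \<infinity>)"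

definition tail_meas :: "(real \<Rightarrow> real) \<Rightarrow> real set \<Rightarrow> nat \<Rightarrow> real" where
  "tail_meas F Y n = measure muF {x \<in> Y. return_time F Y x > enat n}"

end

theory Submission
  imports Defs
begin

text \<open>On \<open>[0, 1/(\<lambda>+1)]\<close> the map \<open>F\<^sub>q\<close> is the parabolic branch \<open>x \<mapsto> x/(1 - \<lambda>x)\<close>, which
  moves the levels \<open>1/(1 + t\<lambda>)\<close> one step up: \<open>F\<^sub>q x \<le> 1/(1 + t\<lambda>)\<close> iff \<open>x \<le> 1/(1 + (t+1)\<lambda>)\<close>.
  Hence the points entering \<open>A\<close> within \<open>N\<close> steps form the interval \<open>Y\<^sub>N = (1/(1 + (N+1)\<lambda>), 1]\<close>,
  and a point of \<open>Y\<^sub>N\<close> has return time \<open>> n\<close> iff it lies in \<open>A\<close> and its image lies below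
  \<open>e\<^sub>n = 1/(1 + (N+n)\<lambda>)\<close>.  On \<open>A\<close> the branches of \<open>F\<^sub>q\<close> are Moebius maps, so
  \<open>G(e) = \<mu>{x \<in> A. F\<^sub>q x \<le> e}\<close> is a finite sum of logarithms of Moebius functions of \<open>e\<close>, and
  \<open>G(0) = 0\<close>.  Its derivative at \<open>0\<close> telescopes to \<open>\<lambda>\<close>, so \<open>\<mu>(\<phi> > n) = G(e\<^sub>n) \<sim> \<lambda> e\<^sub>n \<sim> 1/n\<close>.\<close>

lemma has_integral_inverse_real:
  fixes u v :: real
  assumes "0 < u" "u \<le> v"
  shows "((\<lambda>x. 1 / x) has_integral (ln v - ln u)) {u..v}"
proof -
  have "((\<lambda>x. inverse x) has_integral (ln v - ln u)) {u..v}"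
  proof (rule fundamental_theorem_of_calculus)
    show "(ln has_vector_derivative inverse x) (at x within {u..v})" if "x \<in> {u..v}" for x
      using that assms
      by (auto intro!: has_real_derivative_iff_has_vector_derivative[THEN iffD1]
          DERIV_ln[THEN has_field_derivative_at_within])
  qed (use assms in simp)
  then show ?thesis by (simp add: inverse_eq_divide)
qed

lemma sets_muF [simp]: "sets muF = sets borel"
  by (simp add: muF_def)

lemma emeasure_muF_Icc:
  fixes u v :: real
  assumes "0 < u" "u \<le> v" "v \<le> 1"
  shows "emeasure muF {u..v} = ennreal (ln v - ln u)"
proof -
  have "emeasure muF {u..v} = (\<integral>\<^sup>+ x. ennreal (indicator {0<..1} x / x) * indicator {u..v} x \<partial>lborel)"
    unfolding muF_def by (rule emeasure_density) measurable
  also have "\<dots> = (\<integral>\<^sup>+ x. ennreal (indicator {u..v} x / x) \<partial>lborel)"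
    using assms by (intro nn_integral_cong) (auto simp: indicator_def)
  also have "\<dots> = ennreal (ln v - ln u)"
  proof (rule nn_integral_has_integral_lborel)
    have "((\<lambda>x. if x \<in> {u..v} then 1 / x else 0) has_integral (ln v - ln u)) UNIV"
      using has_integral_inverse_real[OF assms(1,2)] by (rule has_integral_restrict_UNIV[THEN iffD2])
    then show "((\<lambda>x. indicator {u..v} x / x) has_integral ln v - ln u) UNIV"
      by (rule has_integral_eq[rotated]) (auto simp: indicator_def)
  qed (use assms in \<open>auto simp: indicator_def\<close>)
  finally show ?thesis .
qed

lemma emeasure_muF_Ioc:
  fixes u v :: real
  assumes "0 < u" "u \<le> v" "v \<le> 1"
  shows "emeasure muF {u<..v} = ennreal (ln v - ln u)"
proof -
  have "{u..v} = {u<..v} \<union> {u}"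
    using assms by auto
  then have "emeasure muF {u..v} = emeasure muF {u<..v} + emeasure muF {u}"
    by (simp add: plus_emeasure)
  moreover have "emeasure muF {u} = 0"
    using emeasure_muF_Icc[of u u] assms by simp
  ultimately show ?thesis
    using emeasure_muF_Icc[OF assms] by simp
qed

lemma emeasure_finite_UN_ennreal:
  assumes "finite I" "disjoint_family_on S I" "S ` I \<subseteq> sets M"
    and "\<And>i. i \<in> I \<Longrightarrow> emeasure M (S i) = ennreal (f i)"
    and "\<And>i. i \<in> I \<Longrightarrow> 0 \<le> f i"
  shows "emeasure M (\<Union>i\<in>I. S i) = ennreal (\<Sum>i\<in>I. f i)"
proof -
  have "emeasure M (\<Union>i\<in>I. S i) = (\<Sum>i\<in>I. ennreal (f i))"
    using sum_emeasure[OF assms(3,2,1)] assms(4) by simp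
  also have "\<dots> = ennreal (\<Sum>i\<in>I. f i)"
    using assms(5) by (rule sum_ennreal)
  finally show ?thesis .
qed

lemma return_time_gt_iff:
  "enat n < return_time F Y x \<longleftrightarrow> (\<forall>i<n. (F ^^ i) (F x) \<notin> Y)"
proof -
  have shift: "(\<forall>i<n. (F ^^ i) (F x) \<notin> Y) \<longleftrightarrow> (\<forall>j. 1 \<le> j \<and> j \<le> n \<longrightarrow> (F ^^ j) x \<notin> Y)"
  proof (intro iffI allI impI)
    fix j assume "\<forall>i<n. (F ^^ i) (F x) \<notin> Y" "1 \<le> j \<and> j \<le> n"
    then show "(F ^^ j) x \<notin> Y"
      by (cases j) (auto simp: funpow_Suc_right simp del: funpow.simps(2))
  qed (auto simp: funpow_Suc_right simp flip: Suc_le_eq simp del: funpow.simps(2))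
  show ?thesis
  proof (cases "\<exists>m\<ge>1. (F ^^ m) x \<in> Y")
    case True
    define L where "L = (LEAST m. m \<ge> 1 \<and> (F ^^ m) x \<in> Y)"
    have L: "1 \<le> L" "(F ^^ L) x \<in> Y"
      using LeastI_ex[OF True] by (auto simp: L_def)
    have L_min: "L \<le> j" if "1 \<le> j" "(F ^^ j) x \<in> Y" for j
      using that by (auto simp: L_def intro: Least_le)
    have "enat n < return_time F Y x \<longleftrightarrow> n < L"
      using True by (simp add: return_time_def L_def)
    also have "\<dots> \<longleftrightarrow> (\<forall>j. 1 \<le> j \<and> j \<le> n \<longrightarrow> (F ^^ j) x \<notin> Y)"
      using L L_min by (meson le_trans not_le)
    finally show ?thesis
      using shift by simp
  qed (use shift in \<open>auto simp: return_time_def\<close>)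
qed

lemma tendsto_difference_quotient_at_right_0:
  fixes f :: "real \<Rightarrow> real"
  assumes "(f has_real_derivative D) (at 0)"
  shows "((\<lambda>e. (f e - f 0) / e) \<longlongrightarrow> D) (at_right 0)"
proof -
  have "(f has_real_derivative D) (at 0 within {0<..})"
    using assms by (rule has_field_derivative_at_within)
  then have "((\<lambda>y. (f y - f 0) / (y - 0)) \<longlongrightarrow> D) (at 0 within {0<..})"
    by (simp only: has_field_derivative_iff)
  then show ?thesis by simp
qed

text \<open>The Moebius maps \<open>[b, -c; -a, b]\<close> and \<open>[-a, b; b, -c]\<close> of determinant \<open>1\<close> map
  \<open>[c/b, m]\<close> and \<open>[m, b/a]\<close> increasingly resp. decreasingly onto \<open>[0, 1]\<close>, where
  \<open>m = (b + c)/(a + b)\<close>; the fractions \<open>(b e + c)/(a e + b)\<close> and \<open>(c e + b)/(b e + a)\<close> are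
  their inverses.\<close>

locale unimodular =
  fixes a b c :: real
  assumes a_pos: "0 < a" and b_pos: "0 < b" and c_nonneg: "0 \<le> c"
    and det: "b\<^sup>2 - a * c = 1"
begin

lemma left_lt_mid: "c / b < (b + c) / (a + b)"
proof -
  have "c * (a + b) < (b + c) * b"
    using det by (simp add: algebra_simps power2_eq_square)
  then show ?thesis
    using a_pos b_pos by (simp add: divide_simps)
qed

lemma mid_lt_right: "(b + c) / (a + b) < b / a"
proof -
  have "(b + c) * a < b * (a + b)"
    using det by (simp add: algebra_simps power2_eq_square)
  then show ?thesis
    using a_pos b_pos by (simp add: divide_simps)
qed

lemma lower_le_iff:
  assumes "x \<le> (b + c) / (a + b)" "0 \<le> e"
  shows "(b * x - c) / (- a * x + b) \<le> e \<longleftrightarrow> x \<le> (b * e + c) / (a * e + b)"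
proof -
  have "x < b / a"
    using mid_lt_right assms(1) by linarith
  then have den: "0 < - a * x + b"
    using a_pos by (simp add: field_simps)
  have "0 < a * e + b"
    using a_pos b_pos assms(2) by (simp add: add_nonneg_pos)
  moreover have "(b * x - c) / (- a * x + b) \<le> e \<longleftrightarrow> x * (a * e + b) \<le> b * e + c"
    using den by (simp add: pos_divide_le_eq algebra_simps)
  ultimately show ?thesis
    by (simp add: pos_le_divide_eq)
qed

lemma upper_le_iff:
  assumes "(b + c) / (a + b) \<le> x" "0 \<le> e"
  shows "(- a * x + b) / (b * x - c) \<le> e \<longleftrightarrow> (c * e + b) / (b * e + a) \<le> x"
proof -
  have "c / b < x"
    using left_lt_mid assms(1) by linarith
  then have den: "0 < b * x - c"
    using b_pos by (simp add: field_simps)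
  have "0 < b * e + a"
    using a_pos b_pos assms(2) by (simp add: add_nonneg_pos)
  moreover have "(- a * x + b) / (b * x - c) \<le> e \<longleftrightarrow> c * e + b \<le> x * (b * e + a)"
    using den by (simp add: pos_divide_le_eq algebra_simps)
  ultimately show ?thesis
    by (simp add: pos_divide_le_eq)
qed

lemma lower_in_unit:
  assumes "c / b \<le> x" "x \<le> (b + c) / (a + b)"
  shows "0 \<le> (b * x - c) / (- a * x + b) \<and> (b * x - c) / (- a * x + b) \<le> 1"
proof
  have "x < b / a"
    using mid_lt_right assms(2) by linarith
  moreover have "c \<le> b * x"
    using assms(1) b_pos by (simp add: field_simps)
  ultimately show "0 \<le> (b * x - c) / (- a * x + b)"
    using a_pos by (simp add: field_simps)
  show "(b * x - c) / (- a * x + b) \<le> 1"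
    using lower_le_iff[OF assms(2), of 1] assms(2) by simp
qed

lemma upper_in_unit:
  assumes "(b + c) / (a + b) \<le> x" "x \<le> b / a"
  shows "0 \<le> (- a * x + b) / (b * x - c) \<and> (- a * x + b) / (b * x - c) \<le> 1"
proof
  have "c / b < x"
    using left_lt_mid assms(1) by linarith
  moreover have "a * x \<le> b"
    using assms(2) a_pos by (simp add: field_simps)
  ultimately show "0 \<le> (- a * x + b) / (b * x - c)"
    using b_pos by (simp add: field_simps)
  show "(- a * x + b) / (b * x - c) \<le> 1"
    using upper_le_iff[OF assms(1), of 1] assms(1) by (simp add: add.commute)
qed

lemma lower_at_mid: "(b * ((b + c) / (a + b)) - c) / (- a * ((b + c) / (a + b)) + b) = 1"
  and upper_at_mid: "(- a * ((b + c) / (a + b)) + b) / (b * ((b + c) / (a + b)) - c) = 1"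
proof -
  have "0 < a + b" "b * (b + c) - c * (a + b) = 1" "- a * (b + c) + b * (a + b) = 1"
    using a_pos b_pos det by (simp_all add: algebra_simps power2_eq_square)
  then show "(b * ((b + c) / (a + b)) - c) / (- a * ((b + c) / (a + b)) + b) = 1"
    and "(- a * ((b + c) / (a + b)) + b) / (b * ((b + c) / (a + b)) - c) = 1"
    by (simp_all add: field_simps)
qed

lemma left_lt_lower_inv:
  assumes "0 < e"
  shows "c / b < (b * e + c) / (a * e + b)"
proof -
  have "c * (a * e + b) < (b * e + c) * b"
    using det assms by (simp add: algebra_simps power2_eq_square)
  then show ?thesis
    using a_pos b_pos assms by (simp add: divide_simps add_pos_pos)
qed

lemma lower_inv_le_mid:
  assumes "0 \<le> e" "e \<le> 1"
  shows "(b * e + c) / (a * e + b) \<le> (b + c) / (a + b)"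
proof -
  have "(b + c) * (a * e + b) - (b * e + c) * (a + b) = (b\<^sup>2 - a * c) * (1 - e)"
    by (simp add: algebra_simps power2_eq_square)
  then have "(b * e + c) * (a + b) \<le> (b + c) * (a * e + b)"
    using det assms by simp
  moreover have "0 < a * e + b"
    using a_pos b_pos assms by (simp add: add_nonneg_pos)
  ultimately show ?thesis
    using a_pos b_pos by (simp add: divide_simps)
qed

lemma mid_lt_upper_inv:
  assumes "0 \<le> e" "e < 1"
  shows "(b + c) / (a + b) < (c * e + b) / (b * e + a)"
proof -
  have "(c * e + b) * (a + b) - (b + c) * (b * e + a) = (b\<^sup>2 - a * c) * (1 - e)"
    by (simp add: algebra_simps power2_eq_square)
  then have "(b + c) * (b * e + a) < (c * e + b) * (a + b)"
    using det assms by simp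
  moreover have "0 < b * e + a"
    using a_pos b_pos assms by (simp add: add_nonneg_pos)
  ultimately show ?thesis
    using a_pos b_pos by (simp add: divide_simps)
qed

lemma upper_inv_lt_right:
  assumes "0 < e"
  shows "(c * e + b) / (b * e + a) < b / a"
proof -
  have "b * (b * e + a) - (c * e + b) * a = e * (b\<^sup>2 - a * c)"
    by (simp add: algebra_simps power2_eq_square)
  then have "(c * e + b) * a < b * (b * e + a)"
    using det assms by simp
  moreover have "0 < b * e + a"
    using a_pos b_pos assms by (simp add: add_pos_pos)
  ultimately show ?thesis
    using a_pos by (simp add: divide_simps)
qed

lemma has_real_derivative_ln_lower_inv:
  assumes "0 < c"
  shows "((\<lambda>e. ln ((b * e + c) / (a * e + b))) has_real_derivative 1 / (b * c)) (at 0)"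
proof -
  have "((\<lambda>e. ln ((b * e + c) / (a * e + b))) has_real_derivative
      ((b * (a * 0 + b) - (b * 0 + c) * a) / (a * 0 + b)\<^sup>2) / ((b * 0 + c) / (a * 0 + b))) (at 0)"
    using assms b_pos by (auto intro!: derivative_eq_intros simp: power2_eq_square)
  moreover have "b * (a * 0 + b) - (b * 0 + c) * a = 1"
    using det by (simp add: power2_eq_square algebra_simps)
  ultimately show ?thesis
    using assms b_pos by (simp only:) (simp add: field_simps power2_eq_square)
qed

lemma has_real_derivative_ln_upper_inv:
  "((\<lambda>e. ln ((c * e + b) / (b * e + a))) has_real_derivative - 1 / (a * b)) (at 0)"
proof -
  have "((\<lambda>e. ln ((c * e + b) / (b * e + a))) has_real_derivative
      ((c * (b * 0 + a) - (c * 0 + b) * b) / (b * 0 + a)\<^sup>2) / ((c * 0 + b) / (b * 0 + a))) (at 0)"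
    using a_pos b_pos by (auto intro!: derivative_eq_intros simp: power2_eq_square)
  moreover have "c * (b * 0 + a) - (c * 0 + b) * b = -1"
    using det by (simp add: power2_eq_square algebra_simps)
  ultimately show ?thesis
    using a_pos b_pos by (simp only:) (simp add: field_simps power2_eq_square)
qed

end

locale farey_q =
  fixes q :: nat
  assumes odd_q: "odd q" and q_ge_3: "3 \<le> q"
begin

definition theta :: real where "theta = pi / real q"

lemma sin_theta_pos: "0 < sin theta"
  using q_ge_3 by (intro sin_gt_zero) (auto simp: theta_def field_simps)

lemma sq_theta: "sq q x = sin (x * theta) / sin theta"
  by (simp add: sq_def theta_def)

lemma lam_theta: "lam q = 2 * cos theta"
  by (simp add: lam_def theta_def)

lemma lam_pos: "0 < lam q"
proof -
  have "cos theta > 0"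
    using q_ge_3 pi_gt3 by (intro cos_gt_zero) (auto simp: theta_def field_simps)
  then show ?thesis by (simp add: lam_theta)
qed

lemma sq_rec: "sq q (x + 1) = lam q * sq q x - sq q (x - 1)"
proof -
  have "sin ((x + 1) * theta) + sin ((x - 1) * theta) = 2 * cos theta * sin (x * theta)"
    by (simp add: distrib_right left_diff_distrib sin_add sin_diff)
  then show ?thesis
    using sin_theta_pos by (simp add: sq_theta lam_theta field_simps)
qed

lemma sq_det: "(sq q x)\<^sup>2 - sq q (x - 1) * sq q (x + 1) = 1"
proof -
  define u where "u = x * theta"
  have "sin u ^ 2 - (sin u * cos theta - cos u * sin theta) * (sin u * cos theta + cos u * sin theta)
      = sin u ^ 2 * (1 - cos theta ^ 2) + cos u ^ 2 * sin theta ^ 2"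
    by algebra
  also have "\<dots> = sin theta ^ 2"
    by (simp add: sin_squared_eq algebra_simps)
  finally have "sin (x * theta) ^ 2 - sin ((x - 1) * theta) * sin ((x + 1) * theta) = sin theta ^ 2"
    by (simp add: u_def left_diff_distrib distrib_right sin_diff sin_add)
  then show ?thesis
    using sin_theta_pos by (simp add: sq_theta field_simps power2_eq_square)
qed

lemma sq_reflect: "sq q (real q - x) = sq q x"
proof -
  have "(real q - x) * theta = pi - x * theta"
    using q_ge_3 by (simp add: theta_def field_simps)
  then show ?thesis by (simp add: sq_theta)
qed

lemma sq_pos:
  assumes "0 < x" "x < real q"
  shows "0 < sq q x"
proof -
  have "0 < x * theta" "x * theta < pi"
    using assms q_ge_3 by (auto simp: theta_def field_simps)
  then show ?thesis
    using sin_theta_pos by (simp add: sq_theta sin_gt_zero)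
qed

lemma sq_0: "sq q 0 = 0"
  by (simp add: sq_theta)

lemma sq_1: "sq q 1 = 1"
  using sin_theta_pos by (simp add: sq_theta)

lemma sq_q: "sq q (real q) = 0"
  using sq_reflect[of "real q"] sq_0 by simp

definition level :: "real \<Rightarrow> real" where
  "level t = 1 / (1 + t * lam q)"

lemma level_pos: "0 \<le> t \<Longrightarrow> 0 < level t"
  using lam_pos by (simp add: level_def add_pos_nonneg)

lemma level_antimono: "0 \<le> s \<Longrightarrow> s \<le> t \<Longrightarrow> level t \<le> level s"
  using lam_pos by (simp add: level_def frac_le add_pos_nonneg mult_right_mono)

lemma level_lt_1:
  assumes "0 < t"
  shows "level t < 1"
proof -
  have "1 < 1 + t * lam q"
    using assms lam_pos by simp
  then show ?thesis by (simp add: level_def)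
qed

definition k0 :: nat where "k0 = (q + 1) div 2"

lemma real_q_eq: "real q = 2 * real k0 - 1"
  using odd_q by (auto simp: k0_def elim!: oddE)

lemma k0_bounds: "2 \<le> k0" "k0 \<le> q - 1"
  using odd_q q_ge_3 by (auto simp: k0_def elim!: oddE)

lemma Kset_eq: "Kset q = {k0..<q}"
  using q_ge_3 by (auto simp: Kset_def k0_def)

lemma Kset_bounds: "k \<in> Kset q \<Longrightarrow> 2 \<le> k \<and> k \<le> q - 1"
  using k0_bounds by (auto simp: Kset_eq)

definition \<alpha> :: "nat \<Rightarrow> real" where "\<alpha> k = sq q (real k - 1)"
definition \<beta> :: "nat \<Rightarrow> real" where "\<beta> k = sq q (real k)"
definition \<gamma> :: "nat \<Rightarrow> real" where "\<gamma> k = sq q (real k + 1)"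

lemma gk_eq: "gk q k = (\<beta> k, - \<gamma> k, - \<alpha> k, \<beta> k)"
  by (simp add: gk_def \<alpha>_def \<beta>_def \<gamma>_def)

lemma \<alpha>_Suc: "\<alpha> (Suc k) = \<beta> k" and \<beta>_Suc: "\<beta> (Suc k) = \<gamma> k"
  by (simp_all add: \<alpha>_def \<beta>_def \<gamma>_def add.commute)

lemma unimodular_coeffs:
  assumes "2 \<le> k" "k \<le> q - 1"
  shows "unimodular (\<alpha> k) (\<beta> k) (\<gamma> k)"
proof
  have k: "2 \<le> real k" "real k + 1 \<le> real q"
    using assms q_ge_3 by auto
  show "0 < \<alpha> k" "0 < \<beta> k"
    using k by (auto simp: \<alpha>_def \<beta>_def intro!: sq_pos)
  show "0 \<le> \<gamma> k"
    using k sq_q sq_pos[of "real k + 1"] by (cases "real k + 1 = real q") (auto simp: \<gamma>_def)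
  show "(\<beta> k)\<^sup>2 - \<alpha> k * \<gamma> k = 1"
    using sq_det[of "real k"] by (simp add: \<alpha>_def \<beta>_def \<gamma>_def)
qed

lemma unimodular_branch: "k \<in> Kset q \<Longrightarrow> unimodular (\<alpha> k) (\<beta> k) (\<gamma> k)"
  using Kset_bounds unimodular_coeffs by blast

lemma \<gamma>_pos: "1 \<le> k \<Longrightarrow> k \<le> q - 2 \<Longrightarrow> 0 < \<gamma> k"
  using q_ge_3 by (auto simp: \<gamma>_def intro!: sq_pos)

lemma coeffs_last: "\<alpha> (q - 1) = lam q" "\<beta> (q - 1) = 1" "\<gamma> (q - 1) = 0"
proof -
  have "sq q (real q - 2) = lam q"
    using sq_reflect[of 2] sq_rec[of 1] sq_0 sq_1 by simp
  then show "\<alpha> (q - 1) = lam q"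
    using q_ge_3 by (simp add: \<alpha>_def of_nat_diff algebra_simps)
  show "\<beta> (q - 1) = 1" "\<gamma> (q - 1) = 0"
    using q_ge_3 sq_reflect[of 1] sq_1 sq_q by (simp_all add: \<beta>_def \<gamma>_def of_nat_diff)
qed

lemma \<alpha>_k0: "\<alpha> k0 = \<beta> k0"
proof -
  have "real k0 - 1 = real q - real k0"
    using real_q_eq by simp
  then show ?thesis
    unfolding \<alpha>_def \<beta>_def by (simp only: sq_reflect)
qed

definition left_end :: "nat \<Rightarrow> real" where "left_end k = \<gamma> k / \<beta> k"
definition mid_pt :: "nat \<Rightarrow> real" where "mid_pt k = (\<beta> k + \<gamma> k) / (\<alpha> k + \<beta> k)"
definition right_end :: "nat \<Rightarrow> real" where "right_end k = \<beta> k / \<alpha> k"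

lemma left_end_lt_mid_pt: "k \<in> Kset q \<Longrightarrow> left_end k < mid_pt k"
  using unimodular.left_lt_mid[OF unimodular_branch] by (simp add: left_end_def mid_pt_def)

lemma mid_pt_lt_right_end: "k \<in> Kset q \<Longrightarrow> mid_pt k < right_end k"
  using unimodular.mid_lt_right[OF unimodular_branch] by (simp add: right_end_def mid_pt_def)

lemma right_end_Suc: "right_end (Suc k) = left_end k"
  by (simp add: right_end_def left_end_def \<alpha>_Suc \<beta>_Suc)

lemma left_end_Suc_lt:
  assumes "1 \<le> k" "Suc k \<le> q - 1"
  shows "left_end (Suc k) < left_end k"
proof -
  interpret unimodular "\<alpha> (Suc k)" "\<beta> (Suc k)" "\<gamma> (Suc k)"
    using assms by (intro unimodular_coeffs) auto
  show ?thesis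
    using left_lt_mid mid_lt_right right_end_Suc[of k]
    by (simp add: left_end_def right_end_def)
qed

lemma left_end_antimono:
  assumes "1 \<le> i" "i \<le> j" "j \<le> q - 1"
  shows "left_end j \<le> left_end i"
  using assms(2,3)
proof (induction j rule: dec_induct)
  case (step n)
  then show ?case
    using left_end_Suc_lt[of n] assms(1) by simp
qed simp

lemma right_end_le_left_end:
  assumes "k \<in> Kset q" "k' \<in> Kset q" "k < k'"
  shows "right_end k' \<le> left_end k"
proof -
  obtain j where j: "k' = Suc j"
    using assms(3) by (cases k') auto
  then show ?thesis
    using left_end_antimono[of k j] Kset_bounds[OF assms(1)] Kset_bounds[OF assms(2)] assms(3)
    by (simp add: right_end_Suc)
qed

lemma branch_domains_disjoint:
  assumes "k \<in> Kset q" "k' \<in> Kset q" "k \<noteq> k'"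
  shows "{left_end k<..right_end k} \<inter> {left_end k'<..right_end k'} = {}"
  using assms right_end_le_left_end[of k k'] right_end_le_left_end[of k' k]
  by (cases "k < k'") auto

lemma left_end_nonneg:
  assumes "k \<in> Kset q"
  shows "0 \<le> left_end k"
proof -
  interpret unimodular "\<alpha> k" "\<beta> k" "\<gamma> k"
    using assms by (rule unimodular_branch)
  show ?thesis
    using b_pos c_nonneg by (simp add: left_end_def)
qed

lemma left_end_pos:
  assumes "k \<in> {k0..<q - 1}"
  shows "0 < left_end k"
proof -
  have "2 \<le> k" "k \<le> q - 2"
    using assms k0_bounds by auto
  then show ?thesis
    using \<gamma>_pos[of k] unimodular.b_pos[OF unimodular_coeffs, of k] by (simp add: left_end_def)
qed

lemma left_end_last: "left_end (q - 1) = 0"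
  unfolding left_end_def coeffs_last by simp

lemma mid_pt_last: "mid_pt (q - 1) = level 1"
  unfolding mid_pt_def level_def coeffs_last by (simp add: add.commute)

lemma right_end_k0: "right_end k0 = 1"
  using unimodular.b_pos[OF unimodular_coeffs[OF k0_bounds]] by (simp add: right_end_def \<alpha>_k0)

lemma left_end_k0: "left_end k0 = lam q - 1"
proof -
  have "\<gamma> k0 = lam q * \<beta> k0 - \<alpha> k0"
    using sq_rec[of "real k0"] by (simp add: \<alpha>_def \<beta>_def \<gamma>_def)
  then show ?thesis
    using unimodular.b_pos[OF unimodular_coeffs[OF k0_bounds]]
    by (simp add: left_end_def \<alpha>_k0 field_simps)
qed

lemma right_end_q: "right_end q = 0"
  by (simp add: right_end_def \<beta>_def sq_q)

lemma right_end_le_1: "k \<in> Kset q \<Longrightarrow> right_end k \<le> 1"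
  using right_end_le_left_end[of k0 k] left_end_lt_mid_pt[of k0] mid_pt_lt_right_end[of k0]
  by (cases "k = k0") (auto simp: right_end_k0 Kset_eq)

lemma level_1_lt_left_end:
  assumes "k \<in> {k0..<q - 1}"
  shows "level 1 < left_end k"
proof -
  have "Suc (q - 2) = q - 1"
    using q_ge_3 by simp
  then have "right_end (q - 1) = left_end (q - 2)"
    using right_end_Suc[of "q - 2"] by simp
  moreover have "left_end (q - 2) \<le> left_end k"
    using assms k0_bounds by (intro left_end_antimono) auto
  moreover have "mid_pt (q - 1) < right_end (q - 1)"
    using mid_pt_lt_right_end k0_bounds by (simp add: Kset_eq)
  ultimately show ?thesis
    using mid_pt_last by simp
qed

lemma level_1_le_mid_pt:
  assumes "k \<in> Kset q"
  shows "level 1 \<le> mid_pt k"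
proof (cases "k = q - 1")
  case False
  then have "k \<in> {k0..<q - 1}"
    using assms by (auto simp: Kset_eq)
  then show ?thesis
    using level_1_lt_left_end left_end_lt_mid_pt[OF assms] by force
qed (use mid_pt_last in simp)

lemma branch_cover:
  assumes "0 < x" "x \<le> 1"
  shows "\<exists>k\<in>Kset q. left_end k < x \<and> x \<le> right_end k"
proof -
  define P where "P k \<longleftrightarrow> k \<in> Kset q \<and> left_end k < x" for k
  define k where "k = (LEAST k. P k)"
  have "P (q - 1)"
    using k0_bounds assms unfolding P_def left_end_last by (simp add: Kset_eq)
  then have k: "k \<in> Kset q" "left_end k < x"
    using LeastI[of P] by (auto simp: P_def k_def)
  show ?thesis
  proof (cases "k = k0")
    case False
    then obtain j where j: "k = Suc j" "j \<in> Kset q"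
      using k(1) by (cases k) (auto simp: Kset_eq)
    then have "x \<le> left_end j"
      using not_less_Least[of j P] by (auto simp: P_def k_def)
    then show ?thesis
      using j k by (auto simp: right_end_Suc)
  qed (use k assms right_end_k0 in auto)
qed

definition g_map :: "nat \<Rightarrow> real \<Rightarrow> real" where
  "g_map k x = (\<beta> k * x - \<gamma> k) / (- \<alpha> k * x + \<beta> k)"

definition Qg_map :: "nat \<Rightarrow> real \<Rightarrow> real" where
  "Qg_map k x = (- \<alpha> k * x + \<beta> k) / (\<beta> k * x - \<gamma> k)"

definition g_inv :: "nat \<Rightarrow> real \<Rightarrow> real" where
  "g_inv k e = (\<beta> k * e + \<gamma> k) / (\<alpha> k * e + \<beta> k)"

definition Qg_inv :: "nat \<Rightarrow> real \<Rightarrow> real" where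
  "Qg_inv k e = (\<gamma> k * e + \<beta> k) / (\<beta> k * e + \<alpha> k)"

lemma mob_gk: "mob (gk q k) = g_map k"
  and mob_Qmul_gk: "mob (Qmul (gk q k)) = Qg_map k"
  and mob_minv_gk: "mob (minv (gk q k)) = g_inv k"
  and mob_minv_Qmul_gk: "mob (minv (Qmul (gk q k))) = Qg_inv k"
proof -
  have "(- \<gamma> k * e + - \<beta> k) / (- \<beta> k * e + - \<alpha> k) = Qg_inv k e" for e
    unfolding Qg_inv_def minus_mult_left[symmetric] minus_add_distrib[symmetric]
    by (rule minus_divide_divide)
  then show "mob (minv (Qmul (gk q k))) = Qg_inv k"
    by (simp only: fun_eq_iff mob_def minv_def Qmul_def gk_eq prod.case) simp
qed (simp_all add: fun_eq_iff mob_def minv_def Qmul_def gk_eq g_map_def Qg_map_def g_inv_def)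

lemma g_inv_0: "g_inv k 0 = left_end k" and g_inv_1: "g_inv k 1 = mid_pt k"
  and Qg_inv_0: "Qg_inv k 0 = right_end k" and Qg_inv_1: "Qg_inv k 1 = mid_pt k"
  by (simp_all add: g_inv_def Qg_inv_def left_end_def mid_pt_def right_end_def add.commute)

definition on_branch :: "nat \<Rightarrow> real \<Rightarrow> real \<Rightarrow> bool" where
  "on_branch k x y \<longleftrightarrow>
     (x \<in> {left_end k..mid_pt k} \<and> y = g_map k x) \<or> (x \<in> {mid_pt k..right_end k} \<and> y = Qg_map k x)"

lemma Farey_eq_Eps: "Farey q x = (SOME y. \<exists>k\<in>Kset q. on_branch k x y)"
  unfolding Farey_def on_branch_def mob_gk mob_Qmul_gk mob_minv_gk mob_minv_Qmul_gk
    g_inv_0 g_inv_1 Qg_inv_0 Qg_inv_1 ..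

lemma g_map_left_end:
  assumes "k \<in> Kset q"
  shows "g_map k (left_end k) = 0"
  using unimodular.b_pos[OF unimodular_branch[OF assms]] by (simp add: g_map_def left_end_def)

lemma Qg_map_right_end:
  assumes "k \<in> Kset q"
  shows "Qg_map k (right_end k) = 0"
  using unimodular.a_pos[OF unimodular_branch[OF assms]] by (simp add: Qg_map_def right_end_def)

lemma g_map_mid_pt:
  assumes "k \<in> Kset q"
  shows "g_map k (mid_pt k) = 1"
  using unimodular.lower_at_mid[OF unimodular_branch[OF assms]] by (simp add: g_map_def mid_pt_def)

lemma Qg_map_mid_pt:
  assumes "k \<in> Kset q"
  shows "Qg_map k (mid_pt k) = 1"
  using unimodular.upper_at_mid[OF unimodular_branch[OF assms]] by (simp add: Qg_map_def mid_pt_def)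

lemma on_branch_unique_less:
  assumes "k \<in> Kset q" "k' \<in> Kset q" "k < k'" "on_branch k x y" "on_branch k' x y'"
  shows "y = y'"
proof -
  have "right_end k' \<le> left_end k"
    using assms(1-3) by (rule right_end_le_left_end)
  then have x: "x = left_end k" "x = right_end k'"
    using assms(4,5) left_end_lt_mid_pt[OF assms(1)] mid_pt_lt_right_end[OF assms(1)]
      left_end_lt_mid_pt[OF assms(2)] mid_pt_lt_right_end[OF assms(2)]
    by (auto simp: on_branch_def)
  then have "y = g_map k (left_end k)" "y' = Qg_map k' (right_end k')"
    using assms(4,5) left_end_lt_mid_pt[OF assms(1)] mid_pt_lt_right_end[OF assms(2)]
    by (auto simp: on_branch_def)
  then show ?thesis
    using g_map_left_end[OF assms(1)] Qg_map_right_end[OF assms(2)] by simp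
qed

lemma on_branch_unique:
  assumes "k \<in> Kset q" "k' \<in> Kset q" "on_branch k x y" "on_branch k' x y'"
  shows "y = y'"
proof (cases k k' rule: linorder_cases)
  case equal
  then show ?thesis
    using assms g_map_mid_pt Qg_map_mid_pt by (auto simp: on_branch_def)
qed (metis assms on_branch_unique_less)+

lemma Farey_eq_branch:
  assumes "k \<in> Kset q" "on_branch k x y"
  shows "Farey q x = y"
  unfolding Farey_eq_Eps
proof (rule someI2)
  show "\<exists>k\<in>Kset q. on_branch k x y"
    using assms by blast
qed (use assms on_branch_unique in blast)

lemma Farey_eq_g_map: "k \<in> Kset q \<Longrightarrow> left_end k \<le> x \<Longrightarrow> x \<le> mid_pt k \<Longrightarrow> Farey q x = g_map k x"
  by (rule Farey_eq_branch) (auto simp: on_branch_def)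

lemma Farey_eq_Qg_map: "k \<in> Kset q \<Longrightarrow> mid_pt k \<le> x \<Longrightarrow> x \<le> right_end k \<Longrightarrow> Farey q x = Qg_map k x"
  by (rule Farey_eq_branch) (auto simp: on_branch_def)

lemma branch_cover_closed:
  assumes "0 \<le> x" "x \<le> 1"
  shows "\<exists>k\<in>Kset q. left_end k \<le> x \<and> x \<le> right_end k"
proof (cases "x = 0")
  case True
  have "q - 1 \<in> Kset q"
    using k0_bounds by (simp add: Kset_eq)
  moreover from this have "0 \<le> right_end (q - 1)"
    using left_end_nonneg left_end_lt_mid_pt mid_pt_lt_right_end by (meson less_trans not_le)
  ultimately show ?thesis
    using True left_end_last by (metis order_refl)
next
  case False
  then have "0 < x"
    using assms(1) by simp
  then show ?thesis
    using assms(2) branch_cover by (meson less_imp_le)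
qed

lemma Farey_in_unit:
  assumes "0 \<le> x" "x \<le> 1"
  shows "0 \<le> Farey q x \<and> Farey q x \<le> 1"
proof -
  obtain k where k: "k \<in> Kset q" "left_end k \<le> x" "x \<le> right_end k"
    using branch_cover_closed[OF assms] by blast
  interpret unimodular "\<alpha> k" "\<beta> k" "\<gamma> k"
    using k(1) by (rule unimodular_branch)
  show ?thesis
  proof (cases "x \<le> mid_pt k")
    case True
    then show ?thesis
      using k Farey_eq_g_map lower_in_unit by (simp add: g_map_def left_end_def mid_pt_def)
  next
    case False
    then show ?thesis
      using k Farey_eq_Qg_map upper_in_unit by (simp add: Qg_map_def right_end_def mid_pt_def)
  qed
qed

lemma funpow_Farey_in_unit: "0 \<le> x \<Longrightarrow> x \<le> 1 \<Longrightarrow> 0 \<le> (Farey q ^^ n) x \<and> (Farey q ^^ n) x \<le> 1"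
  by (induction n) (auto simp: Farey_in_unit)

lemma Farey_parabolic:
  assumes "0 \<le> x" "x \<le> level 1"
  shows "Farey q x = x / (1 - lam q * x)"
proof -
  have "q - 1 \<in> Kset q"
    using k0_bounds by (simp add: Kset_eq)
  then have "Farey q x = g_map (q - 1) x"
    using assms by (intro Farey_eq_g_map) (use left_end_last mid_pt_last in simp_all)
  then show ?thesis
    unfolding g_map_def coeffs_last by simp
qed

lemma parabolic_denom_pos:
  assumes "0 \<le> y" "y \<le> level 1"
  shows "0 < 1 - lam q * y"
proof -
  have "lam q * y \<le> lam q * level 1"
    using assms lam_pos by (simp add: mult_left_mono)
  also have "\<dots> < 1"
    using lam_pos by (simp add: level_def)
  finally show ?thesis by simp
qed

lemma le_Farey_parabolic:
  assumes "0 \<le> y" "y \<le> level 1"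
  shows "y \<le> Farey q y"
proof -
  have "0 < 1 - lam q * y" "1 - lam q * y \<le> 1"
    using parabolic_denom_pos[OF assms] lam_pos assms(1) by simp_all
  then show ?thesis
    using assms(1) by (simp add: Farey_parabolic[OF assms] divide_simps mult_left_le)
qed

lemma Farey_le_level_iff:
  assumes "0 \<le> y" "y \<le> level 1" "0 \<le> t"
  shows "Farey q y \<le> level t \<longleftrightarrow> y \<le> level (t + 1)"
proof -
  have den: "0 < 1 - lam q * y"
    using parabolic_denom_pos[OF assms(1,2)] .
  have pos: "0 < 1 + t * lam q" "0 < 1 + (t + 1) * lam q"
    using lam_pos assms(3) by (simp_all add: add_pos_nonneg)
  have "Farey q y \<le> level t \<longleftrightarrow> y * (1 + t * lam q) \<le> 1 - lam q * y"
    using den pos by (simp add: Farey_parabolic[OF assms(1,2)] level_def divide_simps)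
  also have "\<dots> \<longleftrightarrow> y * (1 + (t + 1) * lam q) \<le> 1"
    by (simp add: algebra_simps)
  also have "\<dots> \<longleftrightarrow> y \<le> level (t + 1)"
    using pos by (simp add: level_def pos_le_divide_eq)
  finally show ?thesis .
qed

lemma orbit_below_level_iff:
  assumes "1 \<le> t" "0 \<le> y" "y \<le> 1"
  shows "(\<forall>i<Suc m. (Farey q ^^ i) y \<le> level t) \<longleftrightarrow> y \<le> level (t + real m)"
  using assms(2,3)
proof (induction m arbitrary: y)
  case (Suc m)
  have split: "(\<forall>i<Suc (Suc m). (Farey q ^^ i) y \<le> level t) \<longleftrightarrow>
      y \<le> level t \<and> (\<forall>i<Suc m. (Farey q ^^ i) (Farey q y) \<le> level t)"
    by (simp only: All_less_Suc2 funpow_Suc_right funpow_0 comp_apply)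
  show ?case
  proof (cases "y \<le> level t")
    case True
    then have "y \<le> level 1"
      using level_antimono[of 1 t] assms(1) by simp
    then have "Farey q y \<le> level (t + real m) \<longleftrightarrow> y \<le> level (t + real (Suc m))"
      using Farey_le_level_iff[OF Suc.prems(1), of "t + real m"] assms(1) by (simp add: ac_simps)
    moreover have "0 \<le> Farey q y" "Farey q y \<le> 1"
      using Farey_in_unit Suc.prems by simp_all
    ultimately show ?thesis
      using split True Suc.IH by simp
  next
    case False
    moreover have "level (t + real (Suc m)) \<le> level t"
      using assms(1) by (intro level_antimono) auto
    ultimately show ?thesis
      using split by auto
  qed
qed simp

lemma hitting_set_eq:
  "(\<Union>k\<le>N. {x \<in> {0..1}. (Farey q ^^ k) x \<in> {level 1<..1}}) = {level (real N + 1)<..1}"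
proof -
  have hit: "(\<exists>k\<le>N. (Farey q ^^ k) x \<in> {level 1<..1}) \<longleftrightarrow> level (real N + 1) < x"
    if "0 \<le> x" "x \<le> 1" for x
  proof -
    have "(\<exists>k\<le>N. (Farey q ^^ k) x \<in> {level 1<..1}) \<longleftrightarrow>
        \<not> (\<forall>k<Suc N. (Farey q ^^ k) x \<le> level 1)"
      using funpow_Farey_in_unit[OF that] by (auto simp: less_Suc_eq_le not_le)
    also have "\<dots> \<longleftrightarrow> level (real N + 1) < x"
      using orbit_below_level_iff[of 1 x N] that by (simp add: add.commute not_le)
    finally show ?thesis .
  qed
  have pos: "0 < level (real N + 1)"
    by (simp add: level_pos)
  show ?thesis
  proof (intro set_eqI iffI)
    fix x assume "x \<in> (\<Union>k\<le>N. {x \<in> {0..1}. (Farey q ^^ k) x \<in> {level 1<..1}})"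
    then have "0 \<le> x" "x \<le> 1" "\<exists>k\<le>N. (Farey q ^^ k) x \<in> {level 1<..1}"
      by auto
    then show "x \<in> {level (real N + 1)<..1}"
      using hit by simp
  next
    fix x assume x: "x \<in> {level (real N + 1)<..1}"
    then have "0 \<le> x" "x \<le> 1"
      using pos by auto
    moreover from this have "\<exists>k\<le>N. (Farey q ^^ k) x \<in> {level 1<..1}"
      using hit x by simp
    ultimately show "x \<in> (\<Union>k\<le>N. {x \<in> {0..1}. (Farey q ^^ k) x \<in> {level 1<..1}})"
      by auto
  qed
qed

lemma tail_set_eq:
  assumes "1 \<le> n"
  shows "{x \<in> {level (real N + 1)<..1}. enat n < return_time (Farey q) {level (real N + 1)<..1} x}
    = {x \<in> {level 1<..1}. Farey q x \<le> level (real N + real n)}"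
    (is "{x \<in> ?Y. _} = _")
proof -
  obtain m where m: "n = Suc m"
    using assms by (cases n) auto
  have Y_unit: "0 \<le> x \<and> x \<le> 1" if "x \<in> ?Y" for x
    using that level_pos[of "real N + 1"] by auto
  have return: "enat n < return_time (Farey q) ?Y x \<longleftrightarrow> Farey q x \<le> level (real N + real n)"
    if "x \<in> ?Y" for x
  proof -
    have F: "0 \<le> Farey q x" "Farey q x \<le> 1"
      using Farey_in_unit Y_unit[OF that] by simp_all
    have "enat n < return_time (Farey q) ?Y x \<longleftrightarrow>
        (\<forall>i<Suc m. (Farey q ^^ i) (Farey q x) \<le> level (real N + 1))"
      unfolding return_time_gt_iff m using funpow_Farey_in_unit[OF F] by (auto simp: not_less)
    also have "\<dots> \<longleftrightarrow> Farey q x \<le> level (real N + real n)"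
      using orbit_below_level_iff[OF _ F, of "real N + 1" m] m by (simp add: add.assoc)
    finally show ?thesis .
  qed
  have in_A: "level 1 < x" if "x \<in> ?Y" "Farey q x \<le> level (real N + real n)" for x
  proof (rule ccontr)
    assume "\<not> level 1 < x"
    then have "x \<le> Farey q x"
      using Y_unit[OF that(1)] by (intro le_Farey_parabolic) auto
    moreover have "level (real N + real n) \<le> level (real N + 1)"
      using assms by (intro level_antimono) auto
    ultimately show False
      using that by auto
  qed
  have "{level 1<..1} \<subseteq> ?Y"
    using level_antimono[of 1 "real N + 1"] by auto
  then show ?thesis
    using return in_A by auto
qed

lemma left_end_lt_g_inv:
  assumes "k \<in> Kset q" "0 < e"
  shows "left_end k < g_inv k e"
  using unimodular.left_lt_lower_inv[OF unimodular_branch[OF assms(1)] assms(2)]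
  by (simp add: left_end_def g_inv_def)

lemma g_inv_le_mid_pt:
  assumes "k \<in> Kset q" "0 \<le> e" "e \<le> 1"
  shows "g_inv k e \<le> mid_pt k"
  using unimodular.lower_inv_le_mid[OF unimodular_branch[OF assms(1)] assms(2,3)]
  by (simp add: mid_pt_def g_inv_def)

lemma mid_pt_lt_Qg_inv:
  assumes "k \<in> Kset q" "0 \<le> e" "e < 1"
  shows "mid_pt k < Qg_inv k e"
  using unimodular.mid_lt_upper_inv[OF unimodular_branch[OF assms(1)] assms(2,3)]
  by (simp add: mid_pt_def Qg_inv_def)

lemma Qg_inv_lt_right_end:
  assumes "k \<in> Kset q" "0 < e"
  shows "Qg_inv k e < right_end k"
  using unimodular.upper_inv_lt_right[OF unimodular_branch[OF assms(1)] assms(2)]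
  by (simp add: right_end_def Qg_inv_def)

lemma g_map_le_iff:
  assumes "k \<in> Kset q" "x \<le> mid_pt k" "0 \<le> e"
  shows "g_map k x \<le> e \<longleftrightarrow> x \<le> g_inv k e"
  using unimodular.lower_le_iff[OF unimodular_branch[OF assms(1)], of x e] assms(2,3)
  by (simp add: mid_pt_def g_map_def g_inv_def)

lemma Qg_map_le_iff:
  assumes "k \<in> Kset q" "mid_pt k \<le> x" "0 \<le> e"
  shows "Qg_map k x \<le> e \<longleftrightarrow> Qg_inv k e \<le> x"
  using unimodular.upper_le_iff[OF unimodular_branch[OF assms(1)], of x e] assms(2,3)
  by (simp add: mid_pt_def Qg_map_def Qg_inv_def)

lemma g_piece_bounds:
  assumes "k \<in> {k0..<q - 1}" "0 < e" "e < 1"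
  shows "0 < left_end k" "left_end k < g_inv k e" "g_inv k e \<le> mid_pt k" "g_inv k e \<le> 1"
proof -
  have k: "k \<in> Kset q"
    using assms(1) by (auto simp: Kset_eq)
  show "0 < left_end k"
    using assms(1) by (rule left_end_pos)
  show "left_end k < g_inv k e"
    using k assms(2) by (rule left_end_lt_g_inv)
  show "g_inv k e \<le> mid_pt k"
    using k assms(2,3) by (intro g_inv_le_mid_pt) auto
  then show "g_inv k e \<le> 1"
    using mid_pt_lt_right_end[OF k] right_end_le_1[OF k] by simp
qed

lemma Qg_piece_bounds:
  assumes "k \<in> Kset q" "0 < e" "e < 1"
  shows "0 < Qg_inv k e" "mid_pt k < Qg_inv k e" "Qg_inv k e < right_end k" "right_end k \<le> 1"
proof -
  show "mid_pt k < Qg_inv k e"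
    using assms by (intro mid_pt_lt_Qg_inv) auto
  then show "0 < Qg_inv k e"
    using left_end_nonneg[OF assms(1)] left_end_lt_mid_pt[OF assms(1)] by simp
  show "Qg_inv k e < right_end k"
    using assms(1,2) by (rule Qg_inv_lt_right_end)
  show "right_end k \<le> 1"
    using assms(1) by (rule right_end_le_1)
qed

lemma g_piece_in_small_image:
  assumes "k \<in> {k0..<q - 1}" "0 < e" "e < 1" "x \<in> {left_end k<..g_inv k e}"
  shows "level 1 < x \<and> x \<le> 1 \<and> Farey q x \<le> e"
proof -
  have k: "k \<in> Kset q"
    using assms(1) by (auto simp: Kset_eq)
  have x: "left_end k \<le> x" "x \<le> mid_pt k"
    using assms(4) g_piece_bounds[OF assms(1-3)] by auto
  then have "Farey q x \<le> e"
    using Farey_eq_g_map[OF k x] g_map_le_iff[OF k x(2)] assms(2,4) by simp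
  then show ?thesis
    using level_1_lt_left_end[OF assms(1)] g_piece_bounds[OF assms(1-3)] assms(4) by auto
qed

lemma Qg_piece_in_small_image:
  assumes "k \<in> Kset q" "0 < e" "e < 1" "x \<in> {Qg_inv k e..right_end k}"
  shows "level 1 < x \<and> x \<le> 1 \<and> Farey q x \<le> e"
proof -
  have x: "mid_pt k \<le> x" "x \<le> right_end k"
    using assms(4) Qg_piece_bounds[OF assms(1-3)] by auto
  then have "Farey q x \<le> e"
    using Farey_eq_Qg_map[OF assms(1) x] Qg_map_le_iff[OF assms(1) x(1)] assms(2,4) by simp
  then show ?thesis
    using level_1_le_mid_pt[OF assms(1)] Qg_piece_bounds[OF assms(1-3)] assms(4) by auto
qed

text \<open>The branch \<open>g\<^bsub>q-1\<^esub>\<close> lives on \<open>[0, 1/(\<lambda>+1)]\<close>, outside \<open>A\<close>; all other branches lie inside \<open>A\<close>.\<close>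

lemma small_image_decomp:
  assumes e: "0 < e" "e < 1"
  shows "{x \<in> {level 1<..1}. Farey q x \<le> e} =
    (\<Union>k\<in>{k0..<q - 1}. {left_end k<..g_inv k e}) \<union> (\<Union>k\<in>Kset q. {Qg_inv k e..right_end k})"
proof (intro equalityI subsetI)
  fix x assume "x \<in> {x \<in> {level 1<..1}. Farey q x \<le> e}"
  then have x: "level 1 < x" "x \<le> 1" and Fx: "Farey q x \<le> e"
    by auto
  have "0 < x"
    using x level_pos[of 1] by simp
  then obtain k where k: "k \<in> Kset q" "left_end k < x" "x \<le> right_end k"
    using branch_cover x by blast
  show "x \<in> (\<Union>k\<in>{k0..<q - 1}. {left_end k<..g_inv k e}) \<union> (\<Union>k\<in>Kset q. {Qg_inv k e..right_end k})"
  proof (cases "x \<le> mid_pt k")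
    case True
    then have "k \<noteq> q - 1"
      using x mid_pt_last by auto
    then have "k \<in> {k0..<q - 1}"
      using k(1) by (auto simp: Kset_eq)
    moreover have "x \<le> g_inv k e"
      using Fx Farey_eq_g_map[of k x] g_map_le_iff[of k x e] k True e by simp
    ultimately show ?thesis
      using k by auto
  next
    case False
    then have "Qg_inv k e \<le> x"
      using Fx Farey_eq_Qg_map[of k x] Qg_map_le_iff[of k x e] k e by simp
    then show ?thesis
      using k by auto
  qed
next
  fix x assume "x \<in> (\<Union>k\<in>{k0..<q - 1}. {left_end k<..g_inv k e}) \<union> (\<Union>k\<in>Kset q. {Qg_inv k e..right_end k})"
  then show "x \<in> {x \<in> {level 1<..1}. Farey q x \<le> e}"
    using g_piece_in_small_image[OF _ e] Qg_piece_in_small_image[OF _ e] by fastforce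
qed

definition mass_below :: "real \<Rightarrow> real" where
  "mass_below e = (\<Sum>k\<in>{k0..<q - 1}. ln (g_inv k e) - ln (left_end k))
    + (\<Sum>k\<in>Kset q. ln (right_end k) - ln (Qg_inv k e))"

lemma disjoint_family_on_branch_pieces:
  assumes "I \<subseteq> Kset q" "\<And>k. k \<in> I \<Longrightarrow> S k \<subseteq> {left_end k<..right_end k}"
  shows "disjoint_family_on S I"
  unfolding disjoint_family_on_def
proof (intro ballI impI)
  fix k k' assume "k \<in> I" "k' \<in> I" "k \<noteq> k'"
  then show "S k \<inter> S k' = {}"
    using branch_domains_disjoint[of k k'] assms by blast
qed

lemma emeasure_g_pieces:
  assumes "0 < e" "e < 1"
  shows "emeasure muF (\<Union>k\<in>{k0..<q - 1}. {left_end k<..g_inv k e})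
    = ennreal (\<Sum>k\<in>{k0..<q - 1}. ln (g_inv k e) - ln (left_end k))"
proof (rule emeasure_finite_UN_ennreal)
  show "disjoint_family_on (\<lambda>k. {left_end k<..g_inv k e}) {k0..<q - 1}"
  proof (rule disjoint_family_on_branch_pieces)
    fix k assume "k \<in> {k0..<q - 1}"
    then show "{left_end k<..g_inv k e} \<subseteq> {left_end k<..right_end k}"
      using g_piece_bounds[OF _ assms, of k] mid_pt_lt_right_end[of k] by (force simp: Kset_eq)
  qed (auto simp: Kset_eq)
next
  fix k assume "k \<in> {k0..<q - 1}"
  note bounds = g_piece_bounds[OF this assms]
  then show "emeasure muF {left_end k<..g_inv k e} = ennreal (ln (g_inv k e) - ln (left_end k))"
    by (intro emeasure_muF_Ioc) auto
  show "0 \<le> ln (g_inv k e) - ln (left_end k)"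
    using bounds by simp
qed auto

lemma emeasure_Qg_pieces:
  assumes "0 < e" "e < 1"
  shows "emeasure muF (\<Union>k\<in>Kset q. {Qg_inv k e..right_end k})
    = ennreal (\<Sum>k\<in>Kset q. ln (right_end k) - ln (Qg_inv k e))"
proof (rule emeasure_finite_UN_ennreal)
  show "disjoint_family_on (\<lambda>k. {Qg_inv k e..right_end k}) (Kset q)"
  proof (rule disjoint_family_on_branch_pieces)
    fix k assume "k \<in> Kset q"
    then show "{Qg_inv k e..right_end k} \<subseteq> {left_end k<..right_end k}"
      using Qg_piece_bounds[OF _ assms, of k] left_end_lt_mid_pt[of k] by force
  qed simp
next
  fix k assume "k \<in> Kset q"
  note bounds = Qg_piece_bounds[OF this assms]
  then show "emeasure muF {Qg_inv k e..right_end k} = ennreal (ln (right_end k) - ln (Qg_inv k e))"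
    by (intro emeasure_muF_Icc) auto
  show "0 \<le> ln (right_end k) - ln (Qg_inv k e)"
    using bounds by simp
qed (auto simp: Kset_def)

lemma g_pieces_disjoint_Qg_pieces:
  assumes "0 < e" "e < 1"
  shows "(\<Union>k\<in>{k0..<q - 1}. {left_end k<..g_inv k e}) \<inter> (\<Union>k\<in>Kset q. {Qg_inv k e..right_end k}) = {}"
proof -
  have False if k: "k \<in> {k0..<q - 1}" "x \<in> {left_end k<..g_inv k e}"
    and k': "k' \<in> Kset q" "x \<in> {Qg_inv k' e..right_end k'}" for k k' x
  proof -
    have kK: "k \<in> Kset q"
      using k(1) by (auto simp: Kset_eq)
    have x: "x \<le> mid_pt k" "mid_pt k' < x"
      using g_piece_bounds[OF k(1) assms] Qg_piece_bounds[OF k'(1) assms] k(2) k'(2) by auto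
    then have "k \<noteq> k'"
      by auto
    moreover have "x \<in> {left_end k<..right_end k}"
      using k(2) x mid_pt_lt_right_end[OF kK] by auto
    moreover have "x \<in> {left_end k'<..right_end k'}"
      using k'(2) x left_end_lt_mid_pt[OF k'(1)] by auto
    ultimately show False
      using branch_domains_disjoint[OF kK k'(1)] by blast
  qed
  then show ?thesis by blast
qed

lemma measure_small_image:
  assumes e: "0 < e" "e < 1"
  shows "measure muF {x \<in> {level 1<..1}. Farey q x \<le> e} = mass_below e"
proof -
  have "0 \<le> (\<Sum>k\<in>{k0..<q - 1}. ln (g_inv k e) - ln (left_end k))"
  proof (rule sum_nonneg)
    fix k assume "k \<in> {k0..<q - 1}"
    from g_piece_bounds[OF this e] show "0 \<le> ln (g_inv k e) - ln (left_end k)"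
      by simp
  qed
  moreover have "0 \<le> (\<Sum>k\<in>Kset q. ln (right_end k) - ln (Qg_inv k e))"
  proof (rule sum_nonneg)
    fix k assume "k \<in> Kset q"
    from Qg_piece_bounds[OF this e] show "0 \<le> ln (right_end k) - ln (Qg_inv k e)"
      by simp
  qed
  moreover have "emeasure muF {x \<in> {level 1<..1}. Farey q x \<le> e}
      = emeasure muF (\<Union>k\<in>{k0..<q - 1}. {left_end k<..g_inv k e})
        + emeasure muF (\<Union>k\<in>Kset q. {Qg_inv k e..right_end k})"
    unfolding small_image_decomp[OF e] using g_pieces_disjoint_Qg_pieces[OF e]
    by (intro plus_emeasure[symmetric]) (auto simp: Kset_def)
  ultimately have "emeasure muF {x \<in> {level 1<..1}. Farey q x \<le> e} = ennreal (mass_below e)"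
    and "0 \<le> mass_below e"
    unfolding emeasure_g_pieces[OF e] emeasure_Qg_pieces[OF e] mass_below_def
    by (simp_all add: ennreal_plus)
  then show ?thesis
    by (intro measure_eq_emeasure_eq_ennreal)
qed

lemma inverse_\<beta>\<gamma>_telescopes:
  assumes "k \<in> {k0..<q - 1}"
  shows "1 / (\<beta> k * \<gamma> k) = left_end k - left_end (Suc k)"
proof -
  have k: "2 \<le> k" "k \<le> q - 2"
    using assms k0_bounds by auto
  have pos: "0 < \<beta> k" "0 < \<gamma> k"
    using unimodular.b_pos[OF unimodular_coeffs] \<gamma>_pos k by auto
  have "left_end k - left_end (Suc k) = ((\<gamma> k)\<^sup>2 - \<beta> k * \<gamma> (Suc k)) / (\<beta> k * \<gamma> k)"
    using pos by (simp add: left_end_def \<beta>_Suc field_simps power2_eq_square)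
  also have "(\<gamma> k)\<^sup>2 - \<beta> k * \<gamma> (Suc k) = 1"
    using sq_det[of "real k + 1"] by (simp add: \<beta>_def \<gamma>_def add.commute)
  finally show ?thesis
    by simp
qed

lemma inverse_\<alpha>\<beta>_telescopes:
  assumes "k \<in> Kset q"
  shows "1 / (\<alpha> k * \<beta> k) = right_end k - right_end (Suc k)"
proof -
  interpret unimodular "\<alpha> k" "\<beta> k" "\<gamma> k"
    using assms by (rule unimodular_branch)
  have "right_end k - right_end (Suc k) = ((\<beta> k)\<^sup>2 - \<alpha> k * \<gamma> k) / (\<alpha> k * \<beta> k)"
    unfolding right_end_Suc using a_pos b_pos
    by (simp add: right_end_def left_end_def field_simps power2_eq_square)
  then show ?thesis
    using det by simp
qed

lemma sum_inverse_coeff_products: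
  "(\<Sum>k\<in>{k0..<q - 1}. 1 / (\<beta> k * \<gamma> k)) + (\<Sum>k\<in>Kset q. 1 / (\<alpha> k * \<beta> k)) = lam q"
proof -
  have "(\<Sum>k\<in>{k0..<q - 1}. 1 / (\<beta> k * \<gamma> k)) = (\<Sum>k\<in>{k0..<q - 1}. left_end k - left_end (Suc k))"
    using inverse_\<beta>\<gamma>_telescopes by (rule sum.cong[OF refl])
  also have "\<dots> = left_end k0 - left_end (q - 1)"
    using sum_Suc_diff'[of k0 "q - 1" "\<lambda>k. - left_end k"] k0_bounds by simp
  finally have "(\<Sum>k\<in>{k0..<q - 1}. 1 / (\<beta> k * \<gamma> k)) = lam q - 1"
    unfolding left_end_k0 left_end_last by simp
  moreover have "(\<Sum>k\<in>Kset q. 1 / (\<alpha> k * \<beta> k)) = (\<Sum>k\<in>Kset q. right_end k - right_end (Suc k))"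
    using inverse_\<alpha>\<beta>_telescopes by (rule sum.cong[OF refl])
  moreover have "\<dots> = right_end k0 - right_end q"
    using sum_Suc_diff'[of k0 q "\<lambda>k. - right_end k"] k0_bounds by (simp add: Kset_eq)
  ultimately show ?thesis
    by (simp add: right_end_k0 right_end_q)
qed

lemma mass_below_derivative: "((\<lambda>e. mass_below e / e) \<longlongrightarrow> lam q) (at_right 0)"
proof -
  have eq: "mass_below e / e = (\<Sum>k\<in>{k0..<q - 1}. (ln (g_inv k e) - ln (g_inv k 0)) / e)
      + (\<Sum>k\<in>Kset q. - ((ln (Qg_inv k e) - ln (Qg_inv k 0)) / e))" for e
    by (simp add: mass_below_def g_inv_0 Qg_inv_0 add_divide_distrib sum_divide_distrib
        diff_divide_distrib)
  have "((\<lambda>e. (\<Sum>k\<in>{k0..<q - 1}. (ln (g_inv k e) - ln (g_inv k 0)) / e)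
      + (\<Sum>k\<in>Kset q. - ((ln (Qg_inv k e) - ln (Qg_inv k 0)) / e))) \<longlongrightarrow>
      (\<Sum>k\<in>{k0..<q - 1}. 1 / (\<beta> k * \<gamma> k)) + (\<Sum>k\<in>Kset q. - (- 1 / (\<alpha> k * \<beta> k)))) (at_right 0)"
  proof (intro tendsto_add tendsto_sum tendsto_minus tendsto_difference_quotient_at_right_0)
    fix k assume k: "k \<in> {k0..<q - 1}"
    then have "2 \<le> k" "k \<le> q - 2"
      using k0_bounds by auto
    then show "((\<lambda>e. ln (g_inv k e)) has_real_derivative 1 / (\<beta> k * \<gamma> k)) (at 0)"
      unfolding g_inv_def
      using unimodular.has_real_derivative_ln_lower_inv[OF unimodular_coeffs \<gamma>_pos] by simp
  next
    fix k assume "k \<in> Kset q"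
    then show "((\<lambda>e. ln (Qg_inv k e)) has_real_derivative - 1 / (\<alpha> k * \<beta> k)) (at 0)"
      unfolding Qg_inv_def
      by (rule unimodular.has_real_derivative_ln_upper_inv[OF unimodular_branch])
  qed
  then show ?thesis
    unfolding eq using sum_inverse_coeff_products by simp
qed

lemma real_times_level_tendsto: "((\<lambda>n. real n * level (real N + real n)) \<longlongrightarrow> 1 / lam q) sequentially"
proof -
  have "((\<lambda>n. 1 / ((1 + real N * lam q) * inverse (real n) + lam q)) \<longlongrightarrow>
      1 / ((1 + real N * lam q) * 0 + lam q)) sequentially"
    using lam_pos by (intro tendsto_intros lim_inverse_n) auto
  moreover have "\<forall>\<^sub>F n in sequentially.
      1 / ((1 + real N * lam q) * inverse (real n) + lam q) = real n * level (real N + real n)"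
    using eventually_ge_at_top[of "1::nat"]
    by eventually_elim (use lam_pos in \<open>simp add: level_def field_simps add_pos_nonneg\<close>)
  ultimately show ?thesis
    by (simp add: Lim_transform_eventually)
qed

lemma level_tendsto_0: "((\<lambda>n. level (real N + real n)) \<longlongrightarrow> 0) sequentially"
proof -
  have "((\<lambda>n. inverse (real n) * (real n * level (real N + real n))) \<longlongrightarrow> 0 * (1 / lam q)) sequentially"
    by (intro tendsto_mult lim_inverse_n real_times_level_tendsto)
  moreover have "\<forall>\<^sub>F n in sequentially. inverse (real n) * (real n * level (real N + real n)) = level (real N + real n)"
    using eventually_ge_at_top[of "1::nat"] by eventually_elim simp
  ultimately show ?thesis
    by (simp add: Lim_transform_eventually)
qed

lemma tail_meas_eq:
  assumes "1 \<le> n"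
  shows "tail_meas (Farey q) {level (real N + 1)<..1} n = mass_below (level (real N + real n))"
proof -
  have "0 < level (real N + real n)" "level (real N + real n) < 1"
    using assms by (simp_all add: level_pos level_lt_1)
  then show ?thesis
    unfolding tail_meas_def tail_set_eq[OF assms] by (rule measure_small_image)
qed

lemma tail_meas_asymp: "tail_meas (Farey q) {level (real N + 1)<..1} \<sim>[at_top] (\<lambda>n. 1 / real n)"
proof (rule asymp_equivI')
  define e where "e n = level (real N + real n)" for n
  have "filterlim e (at_right 0) sequentially"
    unfolding e_def using level_tendsto_0 level_pos
    by (intro tendsto_imp_filterlim_at_right) auto
  then have "((\<lambda>n. mass_below (e n) / e n) \<longlongrightarrow> lam q) sequentially"
    by (rule filterlim_compose[OF mass_below_derivative])
  then have "((\<lambda>n. mass_below (e n) / e n * (real n * e n)) \<longlongrightarrow> lam q * (1 / lam q)) sequentially"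
    unfolding e_def by (intro tendsto_mult real_times_level_tendsto)
  moreover have "\<forall>\<^sub>F n in sequentially.
      mass_below (e n) / e n * (real n * e n) = tail_meas (Farey q) {level (real N + 1)<..1} n / (1 / real n)"
    using eventually_ge_at_top[of "1::nat"]
  proof eventually_elim
    case (elim n)
    have "0 < e n"
      by (simp add: e_def level_pos)
    then show ?case
      using tail_meas_eq[OF elim] by (simp add: e_def)
  qed
  ultimately show "((\<lambda>n. tail_meas (Farey q) {level (real N + 1)<..1} n / (1 / real n)) \<longlongrightarrow> 1) at_top"
    using lam_pos by (simp add: Lim_transform_eventually)
qed

lemma compact_subset_level_interval:
  fixes C :: "real set"
  assumes "compact C" "C \<subseteq> {0<..1}"
  shows "\<exists>N. C \<subseteq> {level (real N + 1)<..1}"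
proof (cases "C = {}")
  case False
  then obtain m where m: "m \<in> C" "\<forall>t\<in>C. m \<le> t"
    using compact_attains_inf[OF assms(1)] by blast
  then have "0 < m"
    using assms(2) by auto
  then have "\<forall>\<^sub>F n in sequentially. level (1 + real n) < m"
    using order_tendstoD(2)[OF level_tendsto_0[of 1]] by simp
  then obtain N where N: "level (real N + 1) < m"
    by (auto simp: eventually_sequentially add.commute)
  show ?thesis
  proof (intro exI[of _ N] subsetI)
    fix t assume "t \<in> C"
    then show "t \<in> {level (real N + 1)<..1}"
      using m(2) N assms(2) by fastforce
  qed
qed simp

end

theorem proposition2p9:
  fixes q :: nat
  assumes "odd q" and "q \<ge> 3"
  defines "A \<equiv> {1 / (lam q + 1) <.. 1}"
  shows "tail_meas (Farey q) A \<sim>[at_top] (\<lambda>n. 1 / real n) \<and>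
         (\<forall>C. compact C \<and> C \<subseteq> {0<..1} \<longrightarrow>
           (\<exists>Y N. Y \<in> sets lborel \<and> Y \<subseteq> {0<..1} \<and> C \<subseteq> Y \<and>
              Y = (\<Union>k\<le>(N::nat). {x \<in> {0..1}. (Farey q ^^ k) x \<in> A}) \<and>
              tail_meas (Farey q) Y \<sim>[at_top] (\<lambda>n. 1 / real n)))"
proof -
  interpret farey_q q
    using assms(1,2) by unfold_locales
  have A: "A = {level 1<..1}"
    by (simp add: A_def level_def add.commute)
  show ?thesis
  proof (intro conjI allI impI)
    show "tail_meas (Farey q) A \<sim>[at_top] (\<lambda>n. 1 / real n)"
      using tail_meas_asymp[of 0] by (simp add: A)
    fix C :: "real set" assume "compact C \<and> C \<subseteq> {0<..1}"
    then obtain N where N: "C \<subseteq> {level (real N + 1)<..1}"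
      using compact_subset_level_interval by blast
    show "\<exists>Y N. Y \<in> sets lborel \<and> Y \<subseteq> {0<..1} \<and> C \<subseteq> Y \<and>
        Y = (\<Union>k\<le>N. {x \<in> {0..1}. (Farey q ^^ k) x \<in> A}) \<and>
        tail_meas (Farey q) Y \<sim>[at_top] (\<lambda>n. 1 / real n)"
    proof (intro exI conjI)
      show "{level (real N + 1)<..1} = (\<Union>k\<le>N. {x \<in> {0..1}. (Farey q ^^ k) x \<in> A})"
        unfolding A by (rule hitting_set_eq[symmetric])
      show "{level (real N + 1)<..1} \<subseteq> {0<..1}"
        using level_pos[of "real N + 1"] by auto
    qed (use N tail_meas_asymp in simp_all)
  qed
qed

end
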